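(* Let $U\in C^3([0,1])$ satisfy $U(1)=0$, $\max_{[0,1]}U''<0$, $U'(0)=0$, $U'(1)=-1$. For any $\mu_1>0$ and $p>1$ there exists $C>0$ such that for all $\lambda=\mu+i\nu$ with $|\mu|\ge\mu_1$ and $\nu\in\mathbb R$, all $\alpha\ge0$, and all $(\phi,v)\in D(\mathcal A_{\lambda,\alpha})\times W^{1,p}(0,1)$ with $\mathcal A_{\lambda,\alpha}\phi=v$, $$\|\phi\|_{H^1(0,1)}\le C\|(1-x)^{1/2}v\|_{L^1(0,1)} .$$
   Context: $\mathcal A_{\lambda,\alpha}=(U+i\lambda)\big(-\frac{d^2}{dx^2}+\alpha^2\big)+U''$ on $(0,1)$, $D(\mathcal A_{\lambda,\alpha})=\{\phi\in H^2(0,1):\phi'(0)=0,\ \phi(1)=0\}$. *)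

theory Defs
  imports "HOL-Analysis.Analysis"
begin

definition C3_on_unit :: "(real \<Rightarrow> real) \<Rightarrow> (real \<Rightarrow> real) \<Rightarrow> (real \<Rightarrow> real) \<Rightarrow> (real \<Rightarrow> real) \<Rightarrow> bool" where
  "C3_on_unit U U1 U2 U3 \<longleftrightarrow>
     (\<forall>x\<in>{0..1}. (U has_real_derivative U1 x) (at x within {0..1})) \<and>
     (\<forall>x\<in>{0..1}. (U1 has_real_derivative U2 x) (at x within {0..1})) \<and>
     (\<forall>x\<in>{0..1}. (U2 has_real_derivative U3 x) (at x within {0..1})) \<and>
     continuous_on {0..1} U3"

text \<open>phi is (the continuous representative of) an element of H^2(0,1) with
  derivative phi1 (absolutely continuous) and second weak derivative phi2 in L^2(0,1).\<close>
definition H2_rep :: "(real \<Rightarrow> complex) \<Rightarrow> (real \<Rightarrow> complex) \<Rightarrow> (real \<Rightarrow> complex) \<Rightarrow> bool" where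
  "H2_rep phi phi1 phi2 \<longleftrightarrow>
     set_integrable lborel {0..1} phi2 \<and>
     set_integrable lborel {0..1} (\<lambda>x. (cmod (phi2 x))\<^sup>2) \<and>
     (\<forall>x\<in>{0..1}. phi1 x = phi1 0 + (LBINT t:{0..x}. phi2 t)) \<and>
     (\<forall>x\<in>{0..1}. phi x = phi 0 + (LBINT t:{0..x}. phi1 t))"

definition dom_A :: "(real \<Rightarrow> complex) \<Rightarrow> (real \<Rightarrow> complex) \<Rightarrow> (real \<Rightarrow> complex) \<Rightarrow> bool" where
  "dom_A phi phi1 phi2 \<longleftrightarrow> H2_rep phi phi1 phi2 \<and> phi1 0 = 0 \<and> phi 1 = 0"

text \<open>v is (the absolutely continuous representative of) an element of W^{1,p}(0,1)
  with weak derivative w in L^p(0,1).\<close>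
definition W1p_rep :: "real \<Rightarrow> (real \<Rightarrow> complex) \<Rightarrow> (real \<Rightarrow> complex) \<Rightarrow> bool" where
  "W1p_rep p v w \<longleftrightarrow>
     set_integrable lborel {0..1} w \<and>
     set_integrable lborel {0..1} (\<lambda>x. cmod (w x) powr p) \<and>
     (\<forall>x\<in>{0..1}. v x = v 0 + (LBINT t:{0..x}. w t))"

definition A_op :: "(real \<Rightarrow> real) \<Rightarrow> (real \<Rightarrow> real) \<Rightarrow> complex \<Rightarrow> real \<Rightarrow>
     (real \<Rightarrow> complex) \<Rightarrow> (real \<Rightarrow> complex) \<Rightarrow> real \<Rightarrow> complex" where
  "A_op U U2 lam \<alpha> phi phi2 x =
     (complex_of_real (U x) + \<i> * lam) * (- phi2 x + complex_of_real (\<alpha>\<^sup>2) * phi x)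
     + complex_of_real (U2 x) * phi x"

definition H1_norm :: "(real \<Rightarrow> complex) \<Rightarrow> (real \<Rightarrow> complex) \<Rightarrow> real" where
  "H1_norm phi phi1 = sqrt ((LBINT x:{0..1}. (cmod (phi x))\<^sup>2) + (LBINT x:{0..1}. (cmod (phi1 x))\<^sup>2))"

end

theory Submission
  imports Defs
begin

text \<open>Since |Im (U + i\<lambda>)| = |\<mu>| \<ge> \<mu>1, the equation can be solved for the second
  derivative, \<phi>'' = \<alpha>^2\<phi> + (U''\<phi> - v)/(U + i\<lambda>), which is continuous; so \<phi> is a classical
  solution. Multiplying by cnj \<phi> and integrating by parts (the boundary term \<phi>' cnj \<phi> vanishes
  since \<phi>'(0) = 0 = \<phi>(1)) gives
    \<integral>|\<phi>'|^2 + \<alpha>^2 \<integral>|\<phi>|^2 + \<integral>U''|\<phi>|^2/(U + i\<lambda>) = \<integral>v cnj \<phi>/(U + i\<lambda>).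
  Instead of the real part of this identity take Re + k Im with k = (2M/\<mu>1) sgn \<mu>, where M
  bounds |U''|: because U'' \<le> 0, the coefficient of |\<phi>|^2 then contributes at least -1/2, while
  the right-hand side is at most (1 + |k|)/\<mu>1 \<integral>|v||\<phi>|. Finally \<phi>(1) = 0 gives
  |\<phi>(x)|^2 \<le> (1 - x) ||\<phi>'||^2, hence ||\<phi>|| \<le> ||\<phi>'|| and \<integral>|v||\<phi>| \<le> ||\<phi>'|| ||(1 - x)^(1/2) v||_L1,
  so ||\<phi>'||^2/2 \<le> C ||\<phi>'|| ||(1 - x)^(1/2) v||_L1.\<close>

lemma square_integral_le:
  fixes f :: "real \<Rightarrow> real"
  assumes "a \<le> b" "continuous_on {a..b} f"
  shows "(integral {a..b} f)\<^sup>2 \<le> (b - a) * integral {a..b} (\<lambda>y. (f y)\<^sup>2)"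
proof (cases "a = b")
  case True then show ?thesis by simp
next
  case False
  then have ab: "b - a > 0" using assms by simp
  define I where "I = integral {a..b} f"
  define J where "J = integral {a..b} (\<lambda>y. (f y)\<^sup>2)"
  define t where "t = I / (b - a)"
  have int_f: "(f has_integral I) {a..b}" unfolding I_def
    using assms integrable_continuous_interval by blast
  have int_f2: "((\<lambda>y. (f y)\<^sup>2) has_integral J) {a..b}" unfolding J_def
    using assms by (intro integrable_integral integrable_continuous_interval continuous_intros)
  have int_const: "((\<lambda>y. t\<^sup>2) has_integral (b - a) * t\<^sup>2) {a..b}"
    using has_integral_const_real[of "t\<^sup>2" a b] assms by simp
  have "((\<lambda>y. (f y)\<^sup>2 - 2 * t * f y + t\<^sup>2) has_integral (J - 2 * t * I + (b - a) * t\<^sup>2)) {a..b}"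
    by (intro has_integral_add has_integral_diff has_integral_mult_right int_f int_f2 int_const)
  moreover have "\<And>y. (f y)\<^sup>2 - 2 * t * f y + t\<^sup>2 = (f y - t)\<^sup>2" by (simp add: power2_diff)
  ultimately have "((\<lambda>y. (f y - t)\<^sup>2) has_integral (J - 2 * t * I + (b - a) * t\<^sup>2)) {a..b}" by simp
  then have nonneg: "J - 2 * t * I + (b - a) * t\<^sup>2 \<ge> 0" by (rule has_integral_nonneg) auto
  have mean: "(b - a) * t = I" unfolding t_def using ab by simp
  have "(b - a) * t\<^sup>2 = ((b - a) * t) * t" by (simp add: power2_eq_square)
  also have "\<dots> = I * t" using mean by simp
  finally have "2 * t * I - (b - a) * t\<^sup>2 = t * I" by simp
  also have "\<dots> = I\<^sup>2 / (b - a)" unfolding t_def by (simp add: power2_eq_square)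
  finally have "2 * t * I - (b - a) * t\<^sup>2 = I\<^sup>2 / (b - a)" .
  with nonneg have "I\<^sup>2 / (b - a) \<le> J" by linarith
  then show ?thesis using ab unfolding I_def[symmetric] J_def[symmetric] by (simp add: divide_le_eq mult.commute)
qed

lemma norm_square_le_of_vanishing_endpoint:
  fixes phi phi' :: "real \<Rightarrow> 'a::euclidean_space"
  assumes phi': "continuous_on {a..b} phi'"
    and phi: "\<And>y. y \<in> {a..b} \<Longrightarrow> (phi has_vector_derivative phi' y) (at y within {a..b})"
    and "phi b = 0" and x: "x \<in> {a..b}"
  shows "(norm (phi x))\<^sup>2 \<le> (b - x) * integral {a..b} (\<lambda>y. (norm (phi' y))\<^sup>2)"
proof -
  have sub: "{x..b} \<subseteq> {a..b}" using x by auto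
  have "(phi' has_integral phi b - phi x) {x..b}"
    using x by (intro fundamental_theorem_of_calculus has_vector_derivative_within_subset[OF phi sub]) auto
  then have phi_x: "phi x = - integral {x..b} phi'" and "phi' integrable_on {x..b}"
    using \<open>phi b = 0\<close> by (auto dest: integral_unique)
  have cont: "continuous_on {x..b} (\<lambda>y. norm (phi' y))"
    using continuous_on_subset[OF phi' sub] by (intro continuous_intros)
  define I where "I = integral {x..b} (\<lambda>y. norm (phi' y))"
  have "norm (phi x) \<le> I"
    unfolding phi_x I_def norm_minus_cancel
    by (rule integral_norm_bound_integral) (auto intro: \<open>phi' integrable_on {x..b}\<close> integrable_continuous_interval[OF cont])
  then have "(norm (phi x))\<^sup>2 \<le> I\<^sup>2" by (intro power_mono) auto
  also have "\<dots> \<le> (b - x) * integral {x..b} (\<lambda>y. (norm (phi' y))\<^sup>2)"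
    unfolding I_def using x cont by (intro square_integral_le) auto
  also have "\<dots> \<le> (b - x) * integral {a..b} (\<lambda>y. (norm (phi' y))\<^sup>2)"
    using x continuous_on_subset[OF phi' sub] phi'
    by (intro mult_left_mono integral_subset_le[OF sub])
       (auto intro!: integrable_continuous_interval continuous_intros)
  finally show ?thesis .
qed

lemma eq_indefinite_integral_of_LBINT:
  fixes f F :: "real \<Rightarrow> 'a::euclidean_space"
  assumes f: "set_integrable lborel {a..b} f"
    and F: "\<forall>x\<in>{a..b}. F x = F a + (LBINT t:{a..x}. f t)"
    and x: "x \<in> {a..b}"
  shows "F x = F a + integral {a..x} f"
proof -
  have "set_integrable lborel {a..x} f"
    by (rule set_integrable_subset[OF f]) (use x in auto)
  then have "(LBINT t:{a..x}. f t) = integral {a..x} f"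
    by (rule set_borel_integral_eq_integral(2))
  then show ?thesis using bspec[OF F x] by simp
qed

lemma continuous_on_indefinite_LBINT:
  fixes f F :: "real \<Rightarrow> 'a::euclidean_space"
  assumes f: "set_integrable lborel {a..b} f"
    and F: "\<forall>x\<in>{a..b}. F x = F a + (LBINT t:{a..x}. f t)"
  shows "continuous_on {a..b} F"
proof -
  have "continuous_on {a..b} (\<lambda>x. F a + integral {a..x} f)"
    by (intro continuous_intros indefinite_integral_continuous_1 set_borel_integral_eq_integral(1)[OF f])
  then show ?thesis
    by (rule continuous_on_eq) (rule eq_indefinite_integral_of_LBINT[OF f F, symmetric])
qed

lemma has_vector_derivative_indefinite_LBINT:
  fixes f g F :: "real \<Rightarrow> 'a::euclidean_space"
  assumes f: "set_integrable lborel {a..b} f"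
    and F: "\<forall>x\<in>{a..b}. F x = F a + (LBINT t:{a..x}. f t)"
    and g: "continuous_on {a..b} g"
    and fg: "AE x in lborel. x \<in> {a..b} \<longrightarrow> f x = g x"
    and x: "x \<in> {a..b}"
  shows "(F has_vector_derivative g x) (at x within {a..b})"
proof -
  obtain N where N: "{x \<in> space lborel. \<not> (x \<in> {a..b} \<longrightarrow> f x = g x)} \<subseteq> N"
      "emeasure lborel N = 0" "N \<in> sets lborel"
    using fg by (rule AE_E)
  then have "negligible N"
    unfolding negligible_iff_null_sets by (intro null_sets_completionI) (simp add: null_sets_def)
  have F_eq: "F y = F a + integral {a..y} g" if y: "y \<in> {a..b}" for y
  proof -
    have "integral {a..y} f = integral {a..y} g"
      using N(1) y by (intro integral_spike[OF \<open>negligible N\<close>]) auto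
    then show ?thesis using eq_indefinite_integral_of_LBINT[OF f F y] by simp
  qed
  have d: "((\<lambda>y. F a + integral {a..y} g) has_vector_derivative g x) (at x within {a..b})"
    using integral_has_vector_derivative[OF g x] by (auto intro: derivative_eq_intros)
  show ?thesis by (rule has_vector_derivative_transform[OF x F_eq d])
qed

lemma energy_identity:
  fixes phi phi' phi'' :: "real \<Rightarrow> complex"
  assumes "a \<le> b"
    and "\<And>x. x \<in> {a..b} \<Longrightarrow> (phi has_vector_derivative phi' x) (at x within {a..b})"
    and "\<And>x. x \<in> {a..b} \<Longrightarrow> (phi' has_vector_derivative phi'' x) (at x within {a..b})"
    and "phi' a = 0" and "phi b = 0"
  shows "((\<lambda>x. of_real ((cmod (phi' x))\<^sup>2) + phi'' x * cnj (phi x)) has_integral 0) {a..b}"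
proof -
  have "((\<lambda>x. phi' x * cnj (phi' x) + phi'' x * cnj (phi x)) has_integral
           phi' b * cnj (phi b) - phi' a * cnj (phi a)) {a..b}"
    using assms by (intro fundamental_theorem_of_calculus)
      (auto intro!: has_vector_derivative_mult has_vector_derivative_cnj)
  then show ?thesis using assms unfolding complex_norm_square by simp
qed

text \<open>The tilt contributes (2M/\<mu>)|u||Im z|/|z|^2 \<ge> 0, which outweighs a negative
  Re (u/z) = u Re z/|z|^2 unless Re z > (2M/\<mu>)|Im z| \<ge> 2M; and then u Re z \<ge> -M Re z \<ge> -(Re z)^2/2.\<close>
lemma tilted_Re_of_real_divide_ge:
  fixes z :: complex and u M \<mu> :: real
  assumes "-M \<le> u" "u \<le> 0" "0 \<le> M" "0 < \<mu>" "\<mu> \<le> \<bar>Im z\<bar>"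
  shows "-1/2 \<le> Re (of_real u / z) + (2*M/\<mu>) * sgn (Im z) * Im (of_real u / z)"
proof -
  define a s where "a = Re z" and "s = 2*M/\<mu>"
  have D: "a\<^sup>2 + (Im z)\<^sup>2 > 0" using assms by (simp add: add_nonneg_pos)
  have s: "2*M \<le> s * \<bar>Im z\<bar>"
  proof -
    have "2*M = s * \<mu>" unfolding s_def using assms by simp
    also have "\<dots> \<le> s * \<bar>Im z\<bar>" unfolding s_def using assms by (intro mult_left_mono) auto
    finally show ?thesis .
  qed
  have "Re (of_real u / z) + s * sgn (Im z) * Im (of_real u / z)
      = u * (a - s * \<bar>Im z\<bar>) / (a\<^sup>2 + (Im z)\<^sup>2)"
  proof -
    have "Im z * sgn (Im z) = \<bar>Im z\<bar>" by (simp add: sgn_if)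
    then show ?thesis unfolding a_def
      by (simp add: Re_divide Im_divide add_divide_distrib diff_divide_distrib algebra_simps)
  qed
  also have "-1/2 \<le> \<dots>"
  proof (cases "a \<le> s * \<bar>Im z\<bar>")
    case True
    then have "0 \<le> u * (a - s * \<bar>Im z\<bar>)" using assms by (intro mult_nonpos_nonpos) auto
    then have "0 \<le> u * (a - s * \<bar>Im z\<bar>) / (a\<^sup>2 + (Im z)\<^sup>2)"
      using D by simp
    then show ?thesis by linarith
  next
    case False
    then have a: "2*M < a" using s by linarith
    have "M * a \<le> a\<^sup>2 / 2"
      using mult_nonneg_nonneg[of a "a - 2*M"] a assms by (simp add: power2_eq_square algebra_simps)
    moreover have "- (M * a) \<le> u * a"
      using mult_right_mono[of "-M" u a] a assms by simp
    moreover have "u * a \<le> u * (a - s * \<bar>Im z\<bar>)"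
      using mult_left_mono_neg[of "a - s * \<bar>Im z\<bar>" a u] s assms by linarith
    ultimately have "0 \<le> u * (a - s * \<bar>Im z\<bar>) + a\<^sup>2 / 2 + (Im z)\<^sup>2 / 2"
      using zero_le_power2[of "Im z"] by linarith
    then show ?thesis using D by (simp add: field_simps)
  qed
  finally show ?thesis unfolding s_def .
qed

lemma Re_add_mult_Im_le: "Re c + k * Im c \<le> (1 + \<bar>k\<bar>) * cmod c"
proof -
  have "k * Im c \<le> \<bar>k\<bar> * cmod c"
    using abs_Im_le_cmod[of c] by (metis abs_ge_self abs_mult abs_ge_zero mult_left_mono order.trans)
  then show ?thesis using complex_Re_le_cmod[of c] by (simp add: algebra_simps)
qed

lemma tilted_energy_density_ge:
  fixes p p' v z :: complex and u \<alpha> M \<mu> :: real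
  defines "k \<equiv> (2*M/\<mu>) * sgn (Im z)"
    and "w \<equiv> of_real ((cmod p')\<^sup>2) + (of_real (\<alpha>\<^sup>2) * p + (of_real u * p - v) / z) * cnj p"
  assumes "-M \<le> u" "u \<le> 0" "0 \<le> M" "0 < \<mu>" "\<mu> \<le> \<bar>Im z\<bar>"
  shows "(cmod p')\<^sup>2 - (cmod p)\<^sup>2 / 2 - (1 + 2*M/\<mu>) / \<mu> * (cmod v * cmod p) \<le> Re w + k * Im w"
proof -
  define q where "q = of_real u / z"
  have "w = of_real ((cmod p')\<^sup>2) + (of_real (\<alpha>\<^sup>2) + q) * (p * cnj p) - v / z * cnj p"
    unfolding w_def q_def by (simp add: diff_divide_distrib algebra_simps)
  also have "\<dots> = of_real ((cmod p')\<^sup>2 + \<alpha>\<^sup>2 * (cmod p)\<^sup>2) + of_real ((cmod p)\<^sup>2) * q - v / z * cnj p"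
    by (simp only: complex_norm_square[symmetric] of_real_add of_real_mult) (simp add: algebra_simps)
  finally have w_eq: "w = \<dots>" .
  have w: "Re w + k * Im w = (cmod p')\<^sup>2 + \<alpha>\<^sup>2 * (cmod p)\<^sup>2 + (cmod p)\<^sup>2 * (Re q + k * Im q)
      - (Re (v / z * cnj p) + k * Im (v / z * cnj p))"
    unfolding w_eq by (simp add: algebra_simps)
  have "(cmod p)\<^sup>2 * (-1/2) \<le> (cmod p)\<^sup>2 * (Re q + k * Im q)"
    unfolding k_def q_def using assms by (intro mult_left_mono tilted_Re_of_real_divide_ge) auto
  moreover have "Re (v / z * cnj p) + k * Im (v / z * cnj p) \<le> (1 + 2*M/\<mu>) / \<mu> * (cmod v * cmod p)"
  proof -
    have "\<bar>k\<bar> \<le> 2*M/\<mu>" unfolding k_def using assms by (auto simp: abs_mult abs_sgn_eq)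
    moreover have "cmod (v / z * cnj p) = cmod v * cmod p / cmod z" by (simp add: norm_mult norm_divide)
    ultimately have "Re (v / z * cnj p) + k * Im (v / z * cnj p) \<le> (1 + 2*M/\<mu>) * (cmod v * cmod p / cmod z)"
      using Re_add_mult_Im_le[of "v / z * cnj p" k]
        mult_right_mono[of "1 + \<bar>k\<bar>" "1 + 2*M/\<mu>" "cmod (v / z * cnj p)"] by simp
    also have "\<dots> \<le> (1 + 2*M/\<mu>) * (cmod v * cmod p / \<mu>)"
      using abs_Im_le_cmod[of z] assms by (intro mult_left_mono divide_left_mono mult_pos_pos) auto
    finally show ?thesis by simp
  qed
  moreover have "0 \<le> \<alpha>\<^sup>2 * (cmod p)\<^sup>2" by simp
  ultimately show ?thesis unfolding w by linarith
qed

lemma sqrt_add_le_of_energy_inequality: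
  fixes E P R c :: real
  assumes "0 \<le> P" "P \<le> E" "0 \<le> R" "0 \<le> c" and energy: "E - P / 2 \<le> c * sqrt E * R"
  shows "sqrt (P + E) \<le> 4 * c * R"
proof -
  define q where "q = sqrt E"
  have q: "0 \<le> q" "E = q\<^sup>2" unfolding q_def using assms by auto
  have "q * q \<le> q * (2 * c * R)"
    using energy assms q unfolding q_def[symmetric] by (simp add: power2_eq_square algebra_simps)
  then have "q \<le> 2 * c * R"
    using q assms by (cases "q = 0") auto
  have "sqrt (P + E) \<le> sqrt ((2 * q)\<^sup>2)"
    using assms q by (intro real_sqrt_le_mono) (simp add: power_mult_distrib)
  also have "\<dots> = 2 * q" using q real_sqrt_abs[of "2 * q"] by simp
  also have "\<dots> \<le> 4 * c * R" using \<open>q \<le> 2 * c * R\<close> by (simp add: mult_ac)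
  finally show ?thesis .
qed


lemma integral_norm_square_le_of_vanishing_endpoint:
  fixes phi phi' :: "real \<Rightarrow> 'a::euclidean_space"
  assumes "a \<le> b" and phi': "continuous_on {a..b} phi'"
    and phi: "\<And>y. y \<in> {a..b} \<Longrightarrow> (phi has_vector_derivative phi' y) (at y within {a..b})"
    and "phi b = 0"
  shows "integral {a..b} (\<lambda>x. (norm (phi x))\<^sup>2) \<le> (b - a) * ((b - a) * integral {a..b} (\<lambda>y. (norm (phi' y))\<^sup>2))"
proof -
  define E where "E = integral {a..b} (\<lambda>y. (norm (phi' y))\<^sup>2)"
  have "0 \<le> E"
    unfolding E_def using phi' by (intro integral_nonneg integrable_continuous_interval continuous_intros) auto
  have int: "((\<lambda>x. (norm (phi x))\<^sup>2) has_integral integral {a..b} (\<lambda>x. (norm (phi x))\<^sup>2)) {a..b}"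
    using continuous_on_vector_derivative[OF phi]
    by (intro integrable_integral integrable_continuous_interval continuous_intros)
  have "(norm (phi x))\<^sup>2 \<le> (b - a) * E" if x: "x \<in> {a..b}" for x
    using norm_square_le_of_vanishing_endpoint[OF phi' phi \<open>phi b = 0\<close> x] mult_right_mono[of "b - x" "b - a" E]
      \<open>0 \<le> E\<close> x unfolding E_def[symmetric] by auto
  from has_integral_le[OF int has_integral_const_real this] show ?thesis
    using \<open>a \<le> b\<close> unfolding E_def by simp
qed

lemma tilted_energy_inequality:
  fixes phi phi' h v :: "real \<Rightarrow> complex" and U U2 :: "real \<Rightarrow> real"
    and lam :: complex and \<alpha> M \<mu> :: real
  assumes phi': "continuous_on {0..1} phi'" and v: "continuous_on {0..1} v"
    and d_phi: "\<And>x. x \<in> {0..1} \<Longrightarrow> (phi has_vector_derivative phi' x) (at x within {0..1})"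
    and d_phi': "\<And>x. x \<in> {0..1} \<Longrightarrow> (phi' has_vector_derivative h x) (at x within {0..1})"
    and bc: "phi' 0 = 0" "phi 1 = 0"
    and h: "\<And>x. x \<in> {0..1} \<Longrightarrow>
      h x = of_real (\<alpha>\<^sup>2) * phi x + (of_real (U2 x) * phi x - v x) / (of_real (U x) + \<i> * lam)"
    and U2: "\<And>x. x \<in> {0..1} \<Longrightarrow> -M \<le> U2 x \<and> U2 x \<le> 0"
    and "0 \<le> M" "0 < \<mu>" "\<mu> \<le> \<bar>Re lam\<bar>"
  defines "E \<equiv> integral {0..1} (\<lambda>x. (cmod (phi' x))\<^sup>2)"
  shows "E - integral {0..1} (\<lambda>x. (cmod (phi x))\<^sup>2) / 2
    \<le> (1 + 2*M/\<mu>) / \<mu> * sqrt E * integral {0..1} (\<lambda>x. sqrt (1 - x) * cmod (v x))"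
proof -
  define c k where "c = (1 + 2*M/\<mu>) / \<mu>" and "k = (2*M/\<mu>) * sgn (Re lam)"
  have "0 \<le> c"
    unfolding c_def using \<open>0 \<le> M\<close> \<open>0 < \<mu>\<close> by (intro divide_nonneg_pos add_nonneg_nonneg) auto
  have "bounded_linear (\<lambda>z. Re z + k * Im z)"
    by (intro bounded_linear_add bounded_linear_Re
        bounded_linear_mult_right[THEN bounded_linear_compose, OF bounded_linear_Im])
  from has_integral_linear[OF energy_identity[OF _ d_phi d_phi' bc] this]
  have energy: "((\<lambda>x. Re (of_real ((cmod (phi' x))\<^sup>2) + h x * cnj (phi x))
        + k * Im (of_real ((cmod (phi' x))\<^sup>2) + h x * cnj (phi x))) has_integral 0) {0..1}"
    by (simp add: o_def)
  have density: "(cmod (phi' x))\<^sup>2 - (cmod (phi x))\<^sup>2 / 2 - c * sqrt E * (sqrt (1 - x) * cmod (v x))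
      \<le> Re (of_real ((cmod (phi' x))\<^sup>2) + h x * cnj (phi x))
        + k * Im (of_real ((cmod (phi' x))\<^sup>2) + h x * cnj (phi x))" if x: "x \<in> {0..1}" for x
  proof -
    have "(cmod (phi x))\<^sup>2 \<le> (1 - x) * E"
      unfolding E_def using phi' d_phi bc(2) x by (rule norm_square_le_of_vanishing_endpoint)
    then have "cmod (phi x) \<le> sqrt ((1 - x) * E)" by (rule real_le_rsqrt)
    then have "cmod (phi x) \<le> sqrt (1 - x) * sqrt E" by (simp add: real_sqrt_mult)
    then have "c * (cmod (v x) * cmod (phi x)) \<le> c * (cmod (v x) * (sqrt (1 - x) * sqrt E))"
      using \<open>0 \<le> c\<close> by (intro mult_left_mono) auto
    then have "c * (cmod (v x) * cmod (phi x)) \<le> c * sqrt E * (sqrt (1 - x) * cmod (v x))"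
      by (simp add: mult_ac)
    moreover have "Im (of_real (U x) + \<i> * lam) = Re lam" by simp
    ultimately show ?thesis
      using tilted_energy_density_ge[of M "U2 x" \<mu> "of_real (U x) + \<i> * lam" "phi' x" "phi x" "v x" \<alpha>]
        U2[OF x] assms unfolding h[OF x] c_def k_def by fastforce
  qed
  have "((\<lambda>x. (cmod (phi' x))\<^sup>2 - (cmod (phi x))\<^sup>2 / 2 - c * sqrt E * (sqrt (1 - x) * cmod (v x)))
      has_integral E - integral {0..1} (\<lambda>x. (cmod (phi x))\<^sup>2) / 2
        - c * sqrt E * integral {0..1} (\<lambda>x. sqrt (1 - x) * cmod (v x))) {0..1}"
    unfolding E_def using phi' continuous_on_vector_derivative[OF d_phi] v
    by (intro has_integral_diff has_integral_divide has_integral_mult_right integrable_integral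
        integrable_continuous_interval continuous_intros)
  from has_integral_le[OF this energy density] show ?thesis unfolding c_def by simp
qed

lemma H1_estimate_of_ode:
  fixes phi phi' h v :: "real \<Rightarrow> complex" and U U2 :: "real \<Rightarrow> real"
    and lam :: complex and \<alpha> M \<mu> :: real
  assumes phi': "continuous_on {0..1} phi'" and v: "continuous_on {0..1} v"
    and d_phi: "\<And>x. x \<in> {0..1} \<Longrightarrow> (phi has_vector_derivative phi' x) (at x within {0..1})"
    and d_phi': "\<And>x. x \<in> {0..1} \<Longrightarrow> (phi' has_vector_derivative h x) (at x within {0..1})"
    and bc: "phi' 0 = 0" "phi 1 = 0"
    and h: "\<And>x. x \<in> {0..1} \<Longrightarrow>
      h x = of_real (\<alpha>\<^sup>2) * phi x + (of_real (U2 x) * phi x - v x) / (of_real (U x) + \<i> * lam)"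
    and U2: "\<And>x. x \<in> {0..1} \<Longrightarrow> -M \<le> U2 x \<and> U2 x \<le> 0"
    and M_mu: "0 \<le> M" "0 < \<mu>" "\<mu> \<le> \<bar>Re lam\<bar>"
  shows "sqrt (integral {0..1} (\<lambda>x. (cmod (phi x))\<^sup>2) + integral {0..1} (\<lambda>x. (cmod (phi' x))\<^sup>2))
    \<le> 4 * ((1 + 2*M/\<mu>) / \<mu>) * integral {0..1} (\<lambda>x. sqrt (1 - x) * cmod (v x))"
proof (rule sqrt_add_le_of_energy_inequality)
  show "0 \<le> integral {0..1} (\<lambda>x. (cmod (phi x))\<^sup>2)"
    using continuous_on_vector_derivative[OF d_phi]
    by (intro integral_nonneg integrable_continuous_interval continuous_intros) auto
  show "0 \<le> integral {0..1} (\<lambda>x. sqrt (1 - x) * cmod (v x))"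
    using v by (intro integral_nonneg integrable_continuous_interval continuous_intros) auto
  show "0 \<le> (1 + 2*M/\<mu>) / \<mu>"
    using \<open>0 \<le> M\<close> \<open>0 < \<mu>\<close> by (intro divide_nonneg_pos add_nonneg_nonneg) auto
  show "integral {0..1} (\<lambda>x. (cmod (phi x))\<^sup>2) \<le> integral {0..1} (\<lambda>x. (cmod (phi' x))\<^sup>2)"
    using integral_norm_square_le_of_vanishing_endpoint[OF zero_le_one phi' d_phi bc(2)] by simp
qed (rule tilted_energy_inequality[OF phi' v d_phi d_phi' bc h U2 M_mu])

lemma A_op_eq_imp_second_derivative:
  assumes "Re lam \<noteq> 0" and "A_op U U2 lam \<alpha> phi phi2 x = v x"
  shows "phi2 x = of_real (\<alpha>\<^sup>2) * phi x + (of_real (U2 x) * phi x - v x) / (of_real (U x) + \<i> * lam)"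
proof -
  define z where "z = of_real (U x) + \<i> * lam"
  have "Im z = Re lam" unfolding z_def by simp
  then have "z \<noteq> 0" using assms(1) by auto
  moreover have "z * (of_real (\<alpha>\<^sup>2) * phi x - phi2 x) = v x - of_real (U2 x) * phi x"
    using assms(2) unfolding A_op_def z_def by (simp add: algebra_simps)
  ultimately have "of_real (\<alpha>\<^sup>2) * phi x - phi2 x = (v x - of_real (U2 x) * phi x) / z"
    by (simp add: eq_divide_eq mult.commute)
  then show ?thesis unfolding z_def[symmetric] by (simp add: diff_divide_distrib algebra_simps)
qed

lemma C3_on_unit_continuous:
  assumes "C3_on_unit U U1 U2 U3"
  shows "continuous_on {0..1} U" and "continuous_on {0..1} U2"
proof -
  have "\<forall>x\<in>{0..1}. (U has_real_derivative U1 x) (at x within {0..1})"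
    and "\<forall>x\<in>{0..1}. (U2 has_real_derivative U3 x) (at x within {0..1})"
    using assms unfolding C3_on_unit_def by blast+
  then show "continuous_on {0..1} U" and "continuous_on {0..1} U2"
    by (metis DERIV_continuous_on)+
qed

lemma nonpos_bounded_of_SUP_le_zero:
  fixes f :: "'a::topological_space \<Rightarrow> real"
  assumes "compact S" "continuous_on S f" "(SUP x\<in>S. f x) \<le> 0"
  obtains M where "0 \<le> M" "\<And>x. x \<in> S \<Longrightarrow> -M \<le> f x \<and> f x \<le> 0"
proof -
  have "bounded (f ` S)" using assms by (intro compact_imp_bounded compact_continuous_image)
  then obtain B where B: "\<And>x. x \<in> S \<Longrightarrow> \<bar>f x\<bar> \<le> B" unfolding bounded_iff by auto
  have nonpos: "f x \<le> 0" if "x \<in> S" for x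
    using cSUP_upper[OF that bounded_imp_bdd_above[OF \<open>bounded (f ` S)\<close>]] assms(3) by linarith
  show ?thesis
  proof (rule that)
    show "0 \<le> \<bar>B\<bar>" by simp
    fix x assume "x \<in> S"
    then show "- \<bar>B\<bar> \<le> f x \<and> f x \<le> 0" using B[of x] nonpos[of x] by auto
  qed
qed

lemma dom_A_classical_solution:
  fixes U U2 :: "real \<Rightarrow> real" and lam :: complex and \<alpha> p :: real
    and phi phi1 phi2 v w :: "real \<Rightarrow> complex"
  defines "h \<equiv> \<lambda>x. of_real (\<alpha>\<^sup>2) * phi x + (of_real (U2 x) * phi x - v x) / (of_real (U x) + \<i> * lam)"
  assumes U: "continuous_on {0..1} U" and U2: "continuous_on {0..1} U2" and "Re lam \<noteq> 0"
    and dom: "dom_A phi phi1 phi2" and W: "W1p_rep p v w"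
    and eq: "AE x in lborel. x \<in> {0<..<1} \<longrightarrow> A_op U U2 lam \<alpha> phi phi2 x = v x"
  shows "continuous_on {0..1} phi1" and "continuous_on {0..1} v"
    and "\<And>x. x \<in> {0..1} \<Longrightarrow> (phi has_vector_derivative phi1 x) (at x within {0..1})"
    and "\<And>x. x \<in> {0..1} \<Longrightarrow> (phi1 has_vector_derivative h x) (at x within {0..1})"
proof -
  from dom have phi2: "set_integrable lborel {0..1} phi2"
    and phi1_eq: "\<forall>x\<in>{0..1}. phi1 x = phi1 0 + (LBINT t:{0..x}. phi2 t)"
    and phi_eq: "\<forall>x\<in>{0..1}. phi x = phi 0 + (LBINT t:{0..x}. phi1 t)"
    unfolding dom_A_def H2_rep_def by blast+
  from W have "set_integrable lborel {0..1} w" and "\<forall>x\<in>{0..1}. v x = v 0 + (LBINT t:{0..x}. w t)"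
    unfolding W1p_rep_def by blast+
  then show v: "continuous_on {0..1} v" by (rule continuous_on_indefinite_LBINT)
  show phi1: "continuous_on {0..1} phi1" by (rule continuous_on_indefinite_LBINT[OF phi2 phi1_eq])
  show d_phi: "(phi has_vector_derivative phi1 x) (at x within {0..1})" if "x \<in> {0..1}" for x
    by (rule has_vector_derivative_indefinite_LBINT[OF borel_integrable_atLeastAtMost'[OF phi1] phi_eq phi1 _ that])
      simp
  have "continuous_on {0..1} h"
    unfolding h_def using continuous_on_vector_derivative[OF d_phi] \<open>Re lam \<noteq> 0\<close>
    by (intro continuous_intros v U U2) (auto simp: complex_eq_iff)
  moreover have "AE x in lborel. x \<in> {0..1} \<longrightarrow> phi2 x = h x"
    using eq AE_lborel_singleton[of 0] AE_lborel_singleton[of 1]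
    by eventually_elim (auto simp: h_def dest: A_op_eq_imp_second_derivative[OF \<open>Re lam \<noteq> 0\<close>])
  ultimately show "(phi1 has_vector_derivative h x) (at x within {0..1})" if "x \<in> {0..1}" for x
    using has_vector_derivative_indefinite_LBINT[OF phi2 phi1_eq _ _ that] by blast
qed

lemma dom_A_H1_estimate:
  fixes U U2 :: "real \<Rightarrow> real" and lam :: complex and \<alpha> M \<mu> p :: real
    and phi phi1 phi2 v w :: "real \<Rightarrow> complex"
  assumes U: "continuous_on {0..1} U" and U2: "continuous_on {0..1} U2"
    and U2_bounds: "\<And>x. x \<in> {0..1} \<Longrightarrow> -M \<le> U2 x \<and> U2 x \<le> 0"
    and M_mu: "0 \<le> M" "0 < \<mu>" "\<mu> \<le> \<bar>Re lam\<bar>"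
    and dom: "dom_A phi phi1 phi2" and W: "W1p_rep p v w"
    and eq: "AE x in lborel. x \<in> {0<..<1} \<longrightarrow> A_op U U2 lam \<alpha> phi phi2 x = v x"
  shows "H1_norm phi phi1 \<le> 4 * ((1 + 2*M/\<mu>) / \<mu>) * (LBINT x:{0..1}. sqrt (1 - x) * cmod (v x))"
proof -
  have "Re lam \<noteq> 0" using M_mu by auto
  note sol = dom_A_classical_solution[OF U U2 this dom W eq]
  have bc: "phi1 0 = 0" "phi 1 = 0" using dom unfolding dom_A_def by auto
  have LBINT_eq: "(LBINT x:{0..1}. f x) = integral {0..1} f" if "continuous_on {0..1} f" for f :: "real \<Rightarrow> real"
    using that by (intro set_borel_integral_eq_integral(2) borel_integrable_atLeastAtMost')
  have "continuous_on {0..1} (\<lambda>x. (cmod (phi x))\<^sup>2)"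
    using continuous_on_vector_derivative[OF sol(3)] by (intro continuous_intros)
  moreover have "continuous_on {0..1} (\<lambda>x. (cmod (phi1 x))\<^sup>2)" using sol(1) by (intro continuous_intros)
  moreover have "continuous_on {0..1} (\<lambda>x. sqrt (1 - x) * cmod (v x))" using sol(2) by (intro continuous_intros)
  moreover have "sqrt (integral {0..1} (\<lambda>x. (cmod (phi x))\<^sup>2) + integral {0..1} (\<lambda>x. (cmod (phi1 x))\<^sup>2))
      \<le> 4 * ((1 + 2*M/\<mu>) / \<mu>) * integral {0..1} (\<lambda>x. sqrt (1 - x) * cmod (v x))"
    by (rule H1_estimate_of_ode[where U = U and \<alpha> = \<alpha>, OF sol bc _ U2_bounds M_mu]) simp_all
  ultimately show ?thesis unfolding H1_norm_def by (simp add: LBINT_eq)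
qed

theorem mainTheorem10:
  fixes U U1 U2 U3 :: "real \<Rightarrow> real"
  assumes "C3_on_unit U U1 U2 U3"
    and "U 1 = 0"
    and "(SUP x\<in>{0..1}. U2 x) < 0"
    and "U1 0 = 0"
    and "U1 1 = -1"
  shows "\<forall>\<mu>1 > 0. \<forall>p > (1::real). \<exists>C > 0.
     \<forall>lam::complex. \<forall>\<alpha>::real. \<forall>phi phi1 phi2 v w :: real \<Rightarrow> complex.
       \<bar>Re lam\<bar> \<ge> \<mu>1 \<longrightarrow> \<alpha> \<ge> 0 \<longrightarrow>
       dom_A phi phi1 phi2 \<longrightarrow> W1p_rep p v w \<longrightarrow>
       (AE x in lborel. x \<in> {0<..<1} \<longrightarrow> A_op U U2 lam \<alpha> phi phi2 x = v x) \<longrightarrow>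
       H1_norm phi phi1 \<le> C * (LBINT x:{0..1}. sqrt (1 - x) * cmod (v x))"
proof -
  have U: "continuous_on {0..1} U" and U2: "continuous_on {0..1} U2"
    using C3_on_unit_continuous[OF assms(1)] by auto
  obtain M where "0 \<le> M" and M: "\<And>x. x \<in> {0..1} \<Longrightarrow> -M \<le> U2 x \<and> U2 x \<le> 0"
    using nonpos_bounded_of_SUP_le_zero[OF compact_Icc U2 less_imp_le[OF assms(3)]] by blast
  have "0 < 4 * ((1 + 2*M/\<mu>) / \<mu>)" if "0 < \<mu>" for \<mu> :: real
    using \<open>0 \<le> M\<close> that by (simp add: add_pos_nonneg)
  then show ?thesis using dom_A_H1_estimate[OF U U2 M \<open>0 \<le> M\<close>] by blast
qed

end
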